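(* Let $X$ be any quasi-compact Noetherian topological space and $f\colon X\to X$ any continuous map. Then for any finite open cover $\mathfrak U$ of $X$ and any $\epsilon>0$ there is $C>0$ such that \[ N(\mathfrak U_n)\le C(1+\epsilon)^n\quad\text{for all } n, \] where $\mathfrak U_n=\mathfrak U\vee f^{-1}\mathfrak U\vee\dots\vee f^{-(n-1)}\mathfrak U$. In particular $h_{\mathrm{top}}(f)=0$.
   Context: A topological space is Noetherian if every decreasing sequence of closed subsets is eventually stationary. For finite covers $\mathfrak U=\{U_i\},\mathfrak V=\{V_j\}$, $\mathfrak U\vee\mathfrak V=\{U_i\cap V_j\}$, and $N(\mathfrak U)$ is the minimal number of members of $\mathfrak U$ needed to cover $X$. $h_{\mathrm{top}}(f)=\sup_{\mathfrak U}\lim_n\frac1n\log N(\mathfrak U_n)$ over finite open covers. *)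

theory Defs
  imports "HOL-Analysis.Analysis"
begin

definition noetherian_space :: "'a topology \<Rightarrow> bool" where
  "noetherian_space X \<longleftrightarrow>
     (\<forall>C :: nat \<Rightarrow> 'a set. (\<forall>n. closedin X (C n)) \<and> decseq C \<longrightarrow> (\<exists>m. \<forall>n\<ge>m. C n = C m))"

definition finite_open_cover :: "'a topology \<Rightarrow> 'a set set \<Rightarrow> bool" where
  "finite_open_cover X U \<longleftrightarrow> finite U \<and> (\<forall>A\<in>U. openin X A) \<and> \<Union>U = topspace X"

definition join_iter :: "'a topology \<Rightarrow> ('a \<Rightarrow> 'a) \<Rightarrow> 'a set set \<Rightarrow> nat \<Rightarrow> 'a set set" where
  "join_iter X f U n =
     {topspace X \<inter> (\<Inter>k\<in>{..<n}. (f ^^ k) -` (g k)) | g. \<forall>k<n. g k \<in> U}"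

definition min_subcover_card :: "'a topology \<Rightarrow> 'a set set \<Rightarrow> nat" where
  "min_subcover_card X V =
     (LEAST k. \<exists>W. W \<subseteq> V \<and> finite W \<and> card W = k \<and> topspace X \<subseteq> \<Union>W)"

definition h_top :: "'a topology \<Rightarrow> ('a \<Rightarrow> 'a) \<Rightarrow> ereal" where
  "h_top X f =
     (SUP U \<in> {U. finite_open_cover X U}.
        ereal (lim (\<lambda>n. ln (real (min_subcover_card X (join_iter X f U n))) / real n)))"

end

theory Submission
  imports Defs
begin

text \<open>
  Code a point x by its itinerary, the sequence k \<mapsto> {u \<in> U. f^k x \<in> u}. Points with the same
  itinerary word of length n lie in one member of U_n, so N(U_n) is at most the number of n-words
  of the closure S of the set of itineraries, a closed shift-invariant set of sequences over the
  finite alphabet Pow U. The sets of points whose itinerary begins with a given word are locally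
  closed in X. Choosing one whose closure is minimal (X is Noetherian) and using that two disjoint
  locally closed sets cannot have the same closure, one finds an isolated point in every nonempty
  subset of S: S is scattered.

  A scattered subshift has subexponential word complexity. Otherwise Zorn's lemma gives a minimal
  closed invariant K having at least b^n words of every length n. Its derived set is again such a
  set, hence equals K, which is impossible as K has an isolated point. Indeed, if the derived set
  had fewer than b^N words of length N, then all but finitely many points of K would begin with
  one of them; cutting words into N-blocks bounds the number of words of K of length k N by
  (1 + k c) Q^k for some Q < b^N, which is eventually below b^(k N).
\<close>

section \<open>Sequence spaces\<close>

text \<open>Sequences nat \<Rightarrow> 'b carry the product of discrete topologies, whose basic neighbourhoods
  are the cylinders {t. seq_agree n s t}; seq_closed, seq_derived and seq_scattered express
  closedness, the derived set (within K) and scatteredness for this topology.\<close>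

definition seq_agree :: "nat \<Rightarrow> (nat \<Rightarrow> 'b) \<Rightarrow> (nat \<Rightarrow> 'b) \<Rightarrow> bool" where
  "seq_agree n s t \<longleftrightarrow> (\<forall>k<n. s k = t k)"

definition seq_closed :: "(nat \<Rightarrow> 'b) set \<Rightarrow> bool" where
  "seq_closed K \<longleftrightarrow> (\<forall>s. (\<forall>n. \<exists>t\<in>K. seq_agree n s t) \<longrightarrow> s \<in> K)"

definition seq_derived :: "(nat \<Rightarrow> 'b) set \<Rightarrow> (nat \<Rightarrow> 'b) set" where
  "seq_derived K = {s\<in>K. \<forall>n. \<exists>t\<in>K. t \<noteq> s \<and> seq_agree n s t}"

definition seq_scattered :: "(nat \<Rightarrow> 'b) set \<Rightarrow> bool" where
  "seq_scattered S \<longleftrightarrow> (\<forall>K\<subseteq>S. K \<noteq> {} \<longrightarrow> (\<exists>s\<in>K. \<exists>n. \<forall>t\<in>K. seq_agree n s t \<longrightarrow> t = s))"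

definition shift_invariant :: "(nat \<Rightarrow> 'b) set \<Rightarrow> bool" where
  "shift_invariant K \<longleftrightarrow> (\<forall>s\<in>K. (\<lambda>k. s (Suc k)) \<in> K)"

definition words :: "nat \<Rightarrow> (nat \<Rightarrow> 'b) set \<Rightarrow> (nat \<Rightarrow> 'b) set" where
  "words n K = (\<lambda>s. restrict s {..<n}) ` K"

lemma seq_agree_refl [simp]: "seq_agree n s s"
  by (simp add: seq_agree_def)

lemma seq_agree_trans: "seq_agree n s t \<Longrightarrow> seq_agree n t u \<Longrightarrow> seq_agree n s u"
  by (simp add: seq_agree_def)

lemma seq_agree_cong: "seq_agree n s t \<Longrightarrow> seq_agree n s u \<longleftrightarrow> seq_agree n t u"
  by (simp add: seq_agree_def)

lemma seq_agree_iff_restrict_eq: "seq_agree n s t \<longleftrightarrow> restrict s {..<n} = restrict t {..<n}"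
  by (auto simp: seq_agree_def restrict_def fun_eq_iff)

lemma seq_in_alphabet: "K \<subseteq> UNIV \<rightarrow> A \<Longrightarrow> s \<in> K \<Longrightarrow> s k \<in> A"
  by (metis Pi_mem UNIV_I subsetD)

lemma seq_konig:
  fixes P :: "nat \<Rightarrow> (nat \<Rightarrow> 'b) \<Rightarrow> bool"
  assumes start: "P 0 v"
    and extend: "\<And>m v. P m v \<Longrightarrow> \<exists>a. P (Suc m) (v(m := a))"
    and cong: "\<And>m v w. P m v \<Longrightarrow> seq_agree m v w \<Longrightarrow> P m w"
  shows "\<exists>s. \<forall>m. P m s"
proof -
  define w where "w = rec_nat v (\<lambda>m u. u(m := SOME a. P (Suc m) (u(m := a))))"
  have w_Suc: "w (Suc m) = (w m)(m := SOME a. P (Suc m) ((w m)(m := a)))" for m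
    by (simp add: w_def)
  have P_w: "P m (w m)" for m
  proof (induction m)
    case 0
    then show ?case
      using start by (simp add: w_def)
  next
    case (Suc m)
    then show ?case
      unfolding w_Suc by (rule someI_ex[OF extend])
  qed
  have w_agree: "seq_agree m (w m) (w (m + d))" for m d
    by (induction d) (auto simp: seq_agree_def w_Suc)
  define s where "s k = w (Suc k) k" for k
  have "seq_agree m (w m) s" for m
    unfolding seq_agree_def
  proof (intro allI impI)
    fix k
    assume "k < m"
    then have "seq_agree (Suc k) (w (Suc k)) (w m)"
      using w_agree[of "Suc k" "m - Suc k"] by simp
    then show "w m k = s k"
      by (simp add: seq_agree_def s_def)
  qed
  then show ?thesis
    using P_w cong by blast
qed

lemma seq_closed_Inter:
  assumes "\<And>K. K \<in> \<C> \<Longrightarrow> seq_closed K"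
  shows "seq_closed (\<Inter>\<C>)"
  unfolding seq_closed_def
proof (intro allI impI InterI)
  fix s K
  assume "\<forall>n. \<exists>t\<in>\<Inter>\<C>. seq_agree n s t" "K \<in> \<C>"
  then have "\<forall>n. \<exists>t\<in>K. seq_agree n s t"
    by blast
  then show "s \<in> K"
    using assms[OF \<open>K \<in> \<C>\<close>] unfolding seq_closed_def by blast
qed

lemma seq_closed_Int:
  assumes "seq_closed K" "seq_closed L"
  shows "seq_closed (K \<inter> L)"
proof -
  have "seq_closed (\<Inter>{K, L})"
    by (rule seq_closed_Inter) (use assms in auto)
  then show ?thesis
    by simp
qed

lemma seq_closed_cylinder: "seq_closed {s. seq_agree n s t}"
  unfolding seq_closed_def
proof (intro allI impI CollectI)
  fix s
  assume "\<forall>m. \<exists>u\<in>{s. seq_agree n s t}. seq_agree m s u"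
  then obtain u where "seq_agree n u t" "seq_agree n s u"
    by blast
  then show "seq_agree n s t"
    by (rule seq_agree_trans[rotated])
qed

lemma subset_chain_image:
  assumes "subset.chain \<A> \<C>" "\<And>K L. K \<subseteq> L \<Longrightarrow> g K \<subseteq> g L"
  shows "subset.chain UNIV (g ` \<C>)"
  unfolding subset_chain_def
proof (intro conjI ballI)
  fix X Y
  assume "X \<in> g ` \<C>" "Y \<in> g ` \<C>"
  then obtain K L where "K \<in> \<C>" "L \<in> \<C>" "X = g K" "Y = g L"
    by blast
  moreover have "K \<subseteq> L \<or> L \<subseteq> K"
    using assms(1) \<open>K \<in> \<C>\<close> \<open>L \<in> \<C>\<close> by (simp add: subset_chain_def)
  ultimately show "X \<subseteq> Y \<or> Y \<subseteq> X"
    using assms(2) by blast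
qed simp

text \<open>If no one-letter extension worked, each letter a would be excluded by a member L a of the
  chain, and the smallest of the finitely many L a would exclude all letters.\<close>

lemma chain_prefix_extend:
  assumes "finite A" "subset.chain \<A> \<C>" "\<And>K. K \<in> \<C> \<Longrightarrow> K \<subseteq> UNIV \<rightarrow> A"
    and prefix: "\<forall>K\<in>\<C>. \<exists>t\<in>K. seq_agree m v t"
  shows "\<exists>a. \<forall>K\<in>\<C>. \<exists>t\<in>K. seq_agree (Suc m) (v(m := a)) t"
proof (rule ccontr)
  assume "\<nexists>a. \<forall>K\<in>\<C>. \<exists>t\<in>K. seq_agree (Suc m) (v(m := a)) t"
  then have "\<forall>a. \<exists>K. K \<in> \<C> \<and> (\<forall>t\<in>K. \<not> seq_agree (Suc m) (v(m := a)) t)"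
    by blast
  then obtain L where "\<forall>a. L a \<in> \<C> \<and> (\<forall>t\<in>L a. \<not> seq_agree (Suc m) (v(m := a)) t)"
    by (rule choice[THEN exE])
  then have L_mem: "\<And>a. L a \<in> \<C>"
    and L_far: "\<And>a t. t \<in> L a \<Longrightarrow> \<not> seq_agree (Suc m) (v(m := a)) t"
    by auto
  obtain t0 where "t0 \<in> L undefined"
    using prefix L_mem by blast
  then have "t0 0 \<in> A"
    using assms(3)[OF L_mem] by (rule seq_in_alphabet[rotated])
  then have "A \<noteq> {}"
    by auto
  have cmp: "\<And>X Y. X \<in> \<C> \<Longrightarrow> Y \<in> \<C> \<Longrightarrow> X \<subseteq> Y \<or> Y \<subseteq> X"
    using assms(2) by (simp add: subset_chain_def)
  have "subset.chain \<C> (L ` A)"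
    unfolding subset_chain_def using L_mem cmp by auto
  then have "\<Inter>(L ` A) \<in> L ` A"
    using assms(1) \<open>A \<noteq> {}\<close> by (intro Inter_in_chain) auto
  then obtain a0 where a0: "L a0 = \<Inter>(L ` A)"
    by auto
  obtain t where t: "t \<in> L a0" "seq_agree m v t"
    using prefix L_mem[of a0] by auto
  have "t m \<in> A"
    using assms(3)[OF L_mem] t(1) by (rule seq_in_alphabet)
  then have "t \<in> L (t m)"
    using t(1) a0 by auto
  moreover have "seq_agree (Suc m) (v(m := t m)) t"
    using t(2) by (auto simp: seq_agree_def less_Suc_eq)
  ultimately show False
    using L_far by blast
qed

lemma seq_closed_chain_Inter_nonempty:
  assumes "finite A" "subset.chain \<A> \<C>"
    and "\<And>K. K \<in> \<C> \<Longrightarrow> K \<noteq> {} \<and> seq_closed K \<and> K \<subseteq> UNIV \<rightarrow> A"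
  shows "\<Inter>\<C> \<noteq> {}"
proof -
  define P where "P m v \<longleftrightarrow> (\<forall>K\<in>\<C>. \<exists>t\<in>K. seq_agree m v t)" for m v
  have alph: "K \<subseteq> UNIV \<rightarrow> A" if "K \<in> \<C>" for K
    using assms(3)[OF that] by simp
  have "\<exists>a. P (Suc m) (v(m := a))" if "P m v" for m v
    using chain_prefix_extend[OF assms(1,2) alph, of m v] that unfolding P_def by blast
  moreover have "P 0 v" for v
  proof -
    have "\<And>K. K \<in> \<C> \<Longrightarrow> K \<noteq> {}"
      using assms(3) by blast
    then show ?thesis
      unfolding P_def seq_agree_def by (simp add: ex_in_conv)
  qed
  moreover have "P m w" if "P m v" "seq_agree m v w" for m v w
    using that seq_agree_cong[OF that(2)] unfolding P_def by simp
  ultimately obtain s where s: "\<forall>m. P m s"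
    using seq_konig[of P] by blast
  have "s \<in> K" if "K \<in> \<C>" for K
  proof -
    have "\<forall>n. \<exists>t\<in>K. seq_agree n s t"
      using s that unfolding P_def by blast
    then show ?thesis
      using assms(3)[OF that] unfolding seq_closed_def by blast
  qed
  then show ?thesis
    by blast
qed

lemma words_Inter_chain:
  assumes "finite A" "subset.chain \<A> \<C>" "\<C> \<noteq> {}"
    and closed: "\<And>K. K \<in> \<C> \<Longrightarrow> seq_closed K \<and> K \<subseteq> UNIV \<rightarrow> A"
    and w: "\<And>K. K \<in> \<C> \<Longrightarrow> w \<in> words n K"
  shows "w \<in> words n (\<Inter>\<C>)"
proof -
  obtain K0 where "K0 \<in> \<C>"
    using assms(3) by auto
  then obtain t where t: "w = restrict t {..<n}"
    using w unfolding words_def by auto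
  define cyl where "cyl K = K \<inter> {s. seq_agree n s t}" for K
  have "\<Inter>(cyl ` \<C>) \<noteq> {}"
  proof (rule seq_closed_chain_Inter_nonempty[OF assms(1)])
    show "subset.chain UNIV (cyl ` \<C>)"
      using assms(2) by (rule subset_chain_image) (auto simp: cyl_def)
    show "K' \<noteq> {} \<and> seq_closed K' \<and> K' \<subseteq> UNIV \<rightarrow> A" if K': "K' \<in> cyl ` \<C>" for K'
    proof -
      obtain K where K: "K \<in> \<C>" "K' = cyl K"
        using K' by auto
      obtain u where "u \<in> K" "restrict u {..<n} = w"
        using w[OF K(1)] unfolding words_def by auto
      then have "u \<in> K'"
        unfolding K(2) cyl_def t seq_agree_iff_restrict_eq by simp
      moreover have "seq_closed K'"
        unfolding K(2) cyl_def using closed[OF K(1)] seq_closed_cylinder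
        by (intro seq_closed_Int) auto
      moreover have "K' \<subseteq> UNIV \<rightarrow> A"
        unfolding K(2) cyl_def using closed[OF K(1)] by auto
      ultimately show ?thesis
        by auto
    qed
  qed
  then obtain s where s: "s \<in> \<Inter>(cyl ` \<C>)"
    by auto
  have "s \<in> cyl K" if "K \<in> \<C>" for K
    using s that by blast
  then have "s \<in> \<Inter>\<C>" "seq_agree n s t"
    using \<open>K0 \<in> \<C>\<close> unfolding cyl_def by auto
  then have "restrict s {..<n} = w"
    unfolding t seq_agree_iff_restrict_eq by simp
  with \<open>s \<in> \<Inter>\<C>\<close> show ?thesis
    unfolding words_def by auto
qed

lemma infinite_seqs_accumulate:
  assumes "finite A" "Q \<subseteq> UNIV \<rightarrow> A" "infinite Q"
  shows "\<exists>s. \<forall>m. infinite {t\<in>Q. seq_agree m s t}"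
proof -
  define P where "P m v \<longleftrightarrow> infinite {t\<in>Q. seq_agree m v t}" for m v
  have "\<exists>a. P (Suc m) (v(m := a))" if "P m v" for m v
  proof (rule ccontr)
    assume "\<nexists>a. P (Suc m) (v(m := a))"
    then have "finite (\<Union>a\<in>A. {t\<in>Q. seq_agree (Suc m) (v(m := a)) t})"
      using assms(1) unfolding P_def by simp
    moreover have "{t\<in>Q. seq_agree m v t} \<subseteq> (\<Union>a\<in>A. {t\<in>Q. seq_agree (Suc m) (v(m := a)) t})"
    proof
      fix t
      assume t: "t \<in> {t\<in>Q. seq_agree m v t}"
      then have "t m \<in> A"
        using assms(2) seq_in_alphabet by blast
      moreover have "seq_agree (Suc m) (v(m := t m)) t"
        using t by (auto simp: seq_agree_def less_Suc_eq)
      ultimately show "t \<in> (\<Union>a\<in>A. {t\<in>Q. seq_agree (Suc m) (v(m := a)) t})"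
        using t by blast
    qed
    ultimately show False
      using that finite_subset unfolding P_def by blast
  qed
  moreover have "P m w" if "P m v" "seq_agree m v w" for m v w
  proof -
    have "{t\<in>Q. seq_agree m v t} = {t\<in>Q. seq_agree m w t}"
      using seq_agree_cong[OF that(2)] by simp
    then show ?thesis
      using that(1) unfolding P_def by simp
  qed
  moreover have "P 0 v" for v
    using assms(3) unfolding P_def by (simp add: seq_agree_def)
  ultimately show ?thesis
    using seq_konig[of P] unfolding P_def by blast
qed

lemma words_subset_PiE:
  assumes "K \<subseteq> UNIV \<rightarrow> A"
  shows "words n K \<subseteq> PiE {..<n} (\<lambda>_. A)"
  unfolding words_def
proof (rule image_subsetI)
  fix s
  assume "s \<in> K"
  then show "restrict s {..<n} \<in> PiE {..<n} (\<lambda>_. A)"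
    using seq_in_alphabet[OF assms] by (intro restrict_PiE_iff[THEN iffD2]) blast
qed

lemma finite_words:
  assumes "finite A" "K \<subseteq> UNIV \<rightarrow> A"
  shows "finite (words n K)"
  using words_subset_PiE[OF assms(2)] by (rule finite_subset) (simp add: assms(1) finite_PiE)

lemma words_mono: "K \<subseteq> L \<Longrightarrow> words n K \<subseteq> words n L"
  unfolding words_def by (rule image_mono)

lemma card_words_0: "card (words 0 K) = (if K = {} then 0 else 1)"
  unfolding words_def by (simp add: restrict_def image_constant_conv)

lemma card_words_mono:
  assumes "finite (words n K)" "m \<le> n"
  shows "card (words m K) \<le> card (words n K)"
proof -
  have "words m K = (\<lambda>w. restrict w {..<m}) ` words n K"
    unfolding words_def image_image
  proof (rule image_cong[OF refl])
    fix s
    show "restrict s {..<m} = restrict (restrict s {..<n}) {..<m}"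
      using assms(2) by (metis Int_absorb1 lessThan_subset_iff restrict_restrict)
  qed
  then show ?thesis
    using card_image_le[OF assms(1)] by simp
qed

lemma words_Inter_chain_attained:
  assumes "finite A" "subset.chain \<A> \<C>" "\<C> \<noteq> {}"
    and closed: "\<And>K. K \<in> \<C> \<Longrightarrow> seq_closed K \<and> K \<subseteq> UNIV \<rightarrow> A"
  obtains K where "K \<in> \<C>" "words n K \<subseteq> words n (\<Inter>\<C>)"
proof -
  have "words n ` \<C> \<subseteq> Pow (PiE {..<n} (\<lambda>_. A))"
  proof (rule image_subsetI)
    fix K
    assume "K \<in> \<C>"
    then have "K \<subseteq> UNIV \<rightarrow> A"
      using closed by simp
    then show "words n K \<in> Pow (PiE {..<n} (\<lambda>_. A))"
      by (rule PowI[OF words_subset_PiE])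
  qed
  then have "finite (words n ` \<C>)"
    by (rule finite_subset) (simp add: assms(1) finite_PiE)
  moreover have "subset.chain UNIV (words n ` \<C>)"
    using assms(2) words_mono by (rule subset_chain_image)
  ultimately have "\<Inter>(words n ` \<C>) \<in> words n ` \<C>"
    using assms(3) by (intro Inter_in_chain) auto
  then obtain K where K: "K \<in> \<C>" "words n K = \<Inter>(words n ` \<C>)"
    by auto
  have "words n K \<subseteq> words n (\<Inter>\<C>)"
  proof
    fix w
    assume "w \<in> words n K"
    then have w: "\<And>L. L \<in> \<C> \<Longrightarrow> w \<in> words n L"
      unfolding K(2) by blast
    show "w \<in> words n (\<Inter>\<C>)"
      using closed w by (rule words_Inter_chain[OF assms(1-3)])
  qed
  then show ?thesis
    using K(1) that by blast
qed

lemma seq_derived_subset: "seq_derived K \<subseteq> K"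
  unfolding seq_derived_def by blast

lemma seq_closed_derived:
  assumes "seq_closed K"
  shows "seq_closed (seq_derived K)"
  unfolding seq_closed_def
proof (intro allI impI)
  fix s
  assume near: "\<forall>n. \<exists>t\<in>seq_derived K. seq_agree n s t"
  then have "s \<in> K"
    using assms seq_derived_subset unfolding seq_closed_def by blast
  moreover have "\<exists>t\<in>K. t \<noteq> s \<and> seq_agree n s t" for n
  proof -
    obtain t where t: "t \<in> seq_derived K" "seq_agree n s t"
      using near by blast
    show ?thesis
    proof (cases "t = s")
      case True
      then show ?thesis
        using t(1) unfolding seq_derived_def by blast
    next
      case False
      then show ?thesis
        using t seq_derived_subset by blast
    qed
  qed
  ultimately show "s \<in> seq_derived K"
    unfolding seq_derived_def by blast
qed

lemma shift_invariantD: "shift_invariant K \<Longrightarrow> s \<in> K \<Longrightarrow> (\<lambda>k. s (Suc k)) \<in> K"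
  by (simp add: shift_invariant_def)

lemma shift_invariant_shift:
  assumes "shift_invariant K" "s \<in> K"
  shows "(\<lambda>k. s (k + j)) \<in> K"
proof (induction j)
  case 0
  then show ?case
    using assms(2) by simp
next
  case (Suc j)
  from shift_invariantD[OF assms(1) Suc.IH] show ?case
    by simp
qed

lemma shift_invariant_derived:
  assumes "shift_invariant K"
  shows "shift_invariant (seq_derived K)"
  unfolding shift_invariant_def
proof
  fix s
  assume s: "s \<in> seq_derived K"
  have "\<exists>t\<in>K. t \<noteq> (\<lambda>k. s (Suc k)) \<and> seq_agree n (\<lambda>k. s (Suc k)) t" for n
  proof -
    obtain t where t: "t \<in> K" "t \<noteq> s" "seq_agree (Suc n) s t"
      using s unfolding seq_derived_def by blast
    \<comment> \<open>t and s agree at 0, so their shifts still differ\<close>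
    have "(\<lambda>k. t (Suc k)) \<noteq> (\<lambda>k. s (Suc k))"
    proof
      assume "(\<lambda>k. t (Suc k)) = (\<lambda>k. s (Suc k))"
      then have "t k = s k" for k
        using t(3) by (cases k) (auto simp: seq_agree_def fun_eq_iff)
      then show False
        using t(2) by blast
    qed
    moreover have "(\<lambda>k. t (Suc k)) \<in> K"
      using assms t(1) by (rule shift_invariantD)
    moreover have "seq_agree n (\<lambda>k. s (Suc k)) (\<lambda>k. t (Suc k))"
      using t(3) by (simp add: seq_agree_def)
    ultimately show ?thesis
      by blast
  qed
  moreover have "(\<lambda>k. s (Suc k)) \<in> K"
    using assms by (rule shift_invariantD) (use s seq_derived_subset in blast)
  ultimately show "(\<lambda>k. s (Suc k)) \<in> seq_derived K"
    unfolding seq_derived_def by blast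
qed

lemma finite_words_not_derived:
  assumes "finite A" "K \<subseteq> UNIV \<rightarrow> A" "seq_closed K"
  shows "finite {s\<in>K. restrict s {..<N} \<notin> words N (seq_derived K)}"
    (is "finite ?Q")
proof (rule ccontr)
  assume "infinite ?Q"
  moreover have "?Q \<subseteq> UNIV \<rightarrow> A"
    using assms(2) by (rule subset_trans[rotated]) blast
  ultimately obtain s where s: "\<And>m. infinite {t\<in>?Q. seq_agree m s t}"
    using infinite_seqs_accumulate[OF assms(1)] by blast
  have near: "\<exists>t\<in>?Q. t \<noteq> s \<and> seq_agree m s t" for m
  proof -
    have "{t\<in>?Q. seq_agree m s t} - {s} \<noteq> {}"
      using s[of m] by (intro infinite_imp_nonempty) simp
    then show ?thesis
      by blast
  qed
  then have "\<forall>n. \<exists>t\<in>K. seq_agree n s t"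
    by blast
  then have "s \<in> K"
    using assms(3) unfolding seq_closed_def by blast
  then have "s \<in> seq_derived K"
    using near unfolding seq_derived_def by blast
  obtain t where t: "t \<in> ?Q" "seq_agree N s t"
    using near by blast
  then have "restrict t {..<N} = restrict s {..<N}"
    by (simp add: seq_agree_iff_restrict_eq)
  then have "restrict t {..<N} \<in> words N (seq_derived K)"
    using \<open>s \<in> seq_derived K\<close> unfolding words_def by simp
  then show False
    using t(1) by blast
qed

lemma seq_scatteredD:
  "seq_scattered S \<Longrightarrow> K \<subseteq> S \<Longrightarrow> K \<noteq> {} \<Longrightarrow> \<exists>s\<in>K. \<exists>n. \<forall>t\<in>K. seq_agree n s t \<longrightarrow> t = s"
  by (simp add: seq_scattered_def)

section \<open>Word complexity of scattered subshifts\<close>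

definition word_append :: "nat \<Rightarrow> nat \<Rightarrow> (nat \<Rightarrow> 'b) \<Rightarrow> (nat \<Rightarrow> 'b) \<Rightarrow> nat \<Rightarrow> 'b" where
  "word_append m n u v = restrict (\<lambda>k. if k < m then u k else v (k - m)) {..<m + n}"

lemma restrict_eq_word_append:
  "restrict s {..<m + n} = word_append m n (restrict s {..<m}) (restrict (\<lambda>k. s (k + m)) {..<n})"
  by (auto simp: word_append_def fun_eq_iff)

lemma restrict_in_word_append_image:
  assumes "shift_invariant K" "s \<in> K"
  shows "restrict s {..<m + n} \<in> word_append m n (restrict s {..<m}) ` words n K"
proof -
  have "restrict (\<lambda>k. s (k + m)) {..<n} \<in> words n K"
    unfolding words_def using shift_invariant_shift[OF assms] by (rule imageI)
  then show ?thesis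
    unfolding restrict_eq_word_append[of s m n] by (rule imageI)
qed

lemma words_add_subset:
  assumes "shift_invariant K" and block: "\<And>s. s \<in> K - F \<Longrightarrow> restrict s {..<m} \<in> M"
  shows "words (m + n) K \<subseteq> (\<lambda>(u, v). word_append m n u v) ` (M \<times> words n K) \<union> words (m + n) F"
proof
  fix w
  assume "w \<in> words (m + n) K"
  then obtain s where s: "s \<in> K" "w = restrict s {..<m + n}"
    unfolding words_def by blast
  show "w \<in> (\<lambda>(u, v). word_append m n u v) ` (M \<times> words n K) \<union> words (m + n) F"
  proof (cases "s \<in> F")
    case True
    then show ?thesis
      unfolding s(2) words_def by blast
  next
    case False
    then have "restrict s {..<m} \<in> M"
      using block s(1) by blast
    moreover obtain v where "v \<in> words n K" "w = word_append m n (restrict s {..<m}) v"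
      using restrict_in_word_append_image[OF assms(1) s(1), of m n] s(2) by blast
    ultimately have "w \<in> (\<lambda>(u, v). word_append m n u v) ` (M \<times> words n K)"
      by (intro image_eqI[of _ _ "(restrict s {..<m}, v)"]) simp_all
    then show ?thesis
      by blast
  qed
qed

lemma card_words_add_le_blocks:
  assumes "finite A" "K \<subseteq> UNIV \<rightarrow> A" "shift_invariant K" "finite F" "finite M"
    and "\<And>s. s \<in> K - F \<Longrightarrow> restrict s {..<m} \<in> M"
  shows "card (words (m + n) K) \<le> card M * card (words n K) + card F"
proof -
  let ?glue = "\<lambda>(u, v). word_append m n u v"
  have fin: "finite (M \<times> words n K)"
    using assms(5) finite_words[OF assms(1,2)] by blast
  moreover have "finite (words (m + n) F)"
    using assms(4) unfolding words_def by blast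
  ultimately have "card (words (m + n) K) \<le> card (?glue ` (M \<times> words n K) \<union> words (m + n) F)"
    using words_add_subset[OF assms(3,6)] by (intro card_mono finite_UnI finite_imageI)
  also have "\<dots> \<le> card (?glue ` (M \<times> words n K)) + card (words (m + n) F)"
    by (rule card_Un_le)
  also have "\<dots> \<le> card M * card (words n K) + card F"
  proof (rule add_mono)
    show "card (?glue ` (M \<times> words n K)) \<le> card M * card (words n K)"
      using card_image_le[OF fin] by (simp add: card_cartesian_product)
    show "card (words (m + n) F) \<le> card F"
      unfolding words_def using assms(4) by (rule card_image_le)
  qed
  finally show ?thesis .
qed

lemma card_words_add_le:
  assumes "finite A" "K \<subseteq> UNIV \<rightarrow> A" "shift_invariant K"
  shows "card (words (m + n) K) \<le> card (words m K) * card (words n K)"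
proof -
  have "\<And>s. s \<in> K - {} \<Longrightarrow> restrict s {..<m} \<in> words m K"
    unfolding words_def by blast
  from card_words_add_le_blocks[OF assms finite.emptyI finite_words[OF assms(1,2)] this]
  show ?thesis
    by simp
qed

lemma card_words_mult_le:
  assumes "finite A" "K \<subseteq> UNIV \<rightarrow> A" "shift_invariant K"
  shows "card (words (q * N + r) K) \<le> card (words N K) ^ q * card (words r K)"
proof (induction q)
  case (Suc q)
  have "card (words (Suc q * N + r) K) = card (words (N + (q * N + r)) K)"
    by (simp add: add.assoc)
  also have "\<dots> \<le> card (words N K) * card (words (q * N + r) K)"
    by (rule card_words_add_le[OF assms])
  also have "\<dots> \<le> card (words N K) ^ Suc q * card (words r K)"
    using Suc by (simp add: mult.assoc)
  finally show ?case .
qed simp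

lemma card_words_blocks_le:
  assumes "finite A" "K \<subseteq> UNIV \<rightarrow> A" "shift_invariant K" "finite F" "finite M"
    and "\<And>s. s \<in> K - F \<Longrightarrow> restrict s {..<N} \<in> M"
  shows "card (words (k * N) K) \<le> (1 + k * card F) * max 1 (card M) ^ k"
proof (induction k)
  case 0
  then show ?case
    by (simp add: card_words_0)
next
  case (Suc k)
  let ?Q = "max 1 (card M)"
  have "card (words (Suc k * N) K) \<le> card M * card (words (k * N) K) + card F"
    using card_words_add_le_blocks[OF assms] by simp
  also have "\<dots> \<le> ?Q * ((1 + k * card F) * ?Q ^ k) + card F * ?Q ^ Suc k"
    using Suc by (intro add_mono mult_mono) auto
  also have "\<dots> = (1 + Suc k * card F) * ?Q ^ Suc k"
    by (simp add: algebra_simps)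
  finally show ?case .
qed

lemma exists_linear_less_power:
  fixes b c :: real
  assumes "b > 1"
  shows "\<exists>k. 1 + real k * c < b ^ k"
proof -
  have "(\<lambda>k. real k / b ^ k) \<longlonglongrightarrow> 0"
    using lim_n_over_pown[of b] assms by simp
  then have "(\<lambda>k. 1 / b ^ k + c * (real k / b ^ k)) \<longlonglongrightarrow> 0"
    using tendsto_add[OF LIMSEQ_divide_realpow_zero[OF assms] tendsto_mult[OF tendsto_const]] by fastforce
  then have "eventually (\<lambda>k. 1 / b ^ k + c * (real k / b ^ k) < 1) sequentially"
    by (rule order_tendstoD(2)) simp
  then obtain k where "1 / b ^ k + c * (real k / b ^ k) < 1"
    using eventually_sequentially by auto
  moreover have "1 / b ^ k + c * (real k / b ^ k) = (1 + real k * c) / b ^ k"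
    by (simp add: add_divide_distrib mult.commute)
  ultimately show ?thesis
    using assms by auto
qed

definition word_growth_ge :: "real \<Rightarrow> (nat \<Rightarrow> 'b) set \<Rightarrow> bool" where
  "word_growth_ge b K \<longleftrightarrow> (\<forall>n. b ^ n \<le> real (card (words n K)))"

lemma not_word_growth_ge_pos:
  assumes "\<not> word_growth_ge b K" "b > 1"
  obtains N where "N > 0" "real (card (words N K)) < b ^ N"
proof -
  obtain n where n: "real (card (words n K)) < b ^ n"
    using assms(1) unfolding word_growth_ge_def by (auto simp: not_le)
  show thesis
  proof (cases "n = 0")
    case True
    then have "K = {}"
      using n by (simp add: card_words_0 split: if_splits)
    then show ?thesis
      using that[of 1] assms(2) by (simp add: words_def)
  next
    case False
    then show ?thesis
      using n that by simp
  qed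
qed

lemma word_growth_ge_derived:
  assumes "finite A" "K \<subseteq> UNIV \<rightarrow> A" "seq_closed K" "shift_invariant K"
    and "b > 1" "word_growth_ge b K"
  shows "word_growth_ge b (seq_derived K)"
proof (rule ccontr)
  assume "\<not> word_growth_ge b (seq_derived K)"
  then obtain N where N: "N > 0" "real (card (words N (seq_derived K))) < b ^ N"
    using not_word_growth_ge_pos assms(5) by blast
  define M where "M = words N (seq_derived K)"
  define F where "F = {s\<in>K. restrict s {..<N} \<notin> M}"
  define Q where "Q = real (max 1 (card M))"
  have "finite F"
    using finite_words_not_derived[OF assms(1-3)] unfolding F_def M_def .
  have "finite M"
    unfolding M_def using assms(2) seq_derived_subset by (intro finite_words[OF assms(1)]) blast
  have "1 < b ^ N"
    using assms(5) N(1) by simp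
  then have "1 \<le> Q" "Q < b ^ N"
    using N(2) unfolding Q_def M_def by (simp_all add: of_nat_max)
  then have "1 < b ^ N / Q"
    by (simp add: less_divide_eq)
  then obtain k where k: "1 + real k * card F < (b ^ N / Q) ^ k"
    using exists_linear_less_power by blast
  have block: "\<And>s. s \<in> K - F \<Longrightarrow> restrict s {..<N} \<in> M"
    unfolding F_def by blast
  have "b ^ (k * N) \<le> real (card (words (k * N) K))"
    using assms(6) unfolding word_growth_ge_def by blast
  also have "\<dots> \<le> real ((1 + k * card F) * max 1 (card M) ^ k)"
    using card_words_blocks_le[OF assms(1,2,4) \<open>finite F\<close> \<open>finite M\<close> block] by (rule of_nat_mono)
  also have "\<dots> = (1 + real k * card F) * Q ^ k"
    by (simp add: Q_def algebra_simps)
  also have "\<dots> < (b ^ N / Q) ^ k * Q ^ k"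
    using k \<open>1 \<le> Q\<close> by (intro mult_strict_right_mono) auto
  also have "\<dots> = (b ^ N) ^ k"
    using \<open>1 \<le> Q\<close> by (simp add: power_divide)
  also have "\<dots> = b ^ (k * N)"
    by (metis power_mult mult.commute)
  finally show False
    by simp
qed

lemma word_growth_ge_Inter_chain:
  assumes "finite A" "subset.chain \<A> \<C>" "\<C> \<noteq> {}"
    and mem: "\<And>K. K \<in> \<C> \<Longrightarrow> seq_closed K \<and> K \<subseteq> UNIV \<rightarrow> A \<and> word_growth_ge b K"
  shows "word_growth_ge b (\<Inter>\<C>)"
  unfolding word_growth_ge_def
proof
  fix n
  have closed: "seq_closed K \<and> K \<subseteq> UNIV \<rightarrow> A" if "K \<in> \<C>" for K
    using mem[OF that] by simp
  obtain K where K: "K \<in> \<C>" "words n K \<subseteq> words n (\<Inter>\<C>)"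
    using words_Inter_chain_attained[OF assms(1-3) closed] by blast
  have "K \<subseteq> UNIV \<rightarrow> A"
    using closed[OF K(1)] by simp
  with Inter_lower[OF K(1)] have "\<Inter>\<C> \<subseteq> UNIV \<rightarrow> A"
    by (rule subset_trans)
  then have "card (words n K) \<le> card (words n (\<Inter>\<C>))"
    using K(2) by (intro card_mono finite_words[OF assms(1)])
  then show "b ^ n \<le> real (card (words n (\<Inter>\<C>)))"
    using mem[OF K(1)] unfolding word_growth_ge_def by (meson of_nat_le_iff order_trans)
qed

lemma subset_Zorn_Inter:
  assumes "\<A> \<noteq> {}" and "\<And>\<C>. \<C> \<noteq> {} \<Longrightarrow> subset.chain \<A> \<C> \<Longrightarrow> \<Inter>\<C> \<in> \<A>"
  shows "\<exists>M\<in>\<A>. \<forall>X\<in>\<A>. X \<subseteq> M \<longrightarrow> X = M"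
proof -
  have "\<exists>M\<in>uminus ` \<A>. \<forall>X\<in>uminus ` \<A>. M \<subseteq> X \<longrightarrow> X = M"
  proof (rule subset_Zorn_nonempty)
    show "uminus ` \<A> \<noteq> {}"
      using assms(1) by blast
    fix \<C>
    assume "\<C> \<noteq> {}" and chain: "subset.chain (uminus ` \<A>) \<C>"
    have "subset.chain \<A> (uminus ` \<C>)"
      using chain unfolding subset_chain_def by (auto simp: image_iff)
    then have "\<Inter>(uminus ` \<C>) \<in> \<A>"
      using \<open>\<C> \<noteq> {}\<close> by (intro assms(2)) auto
    moreover have "\<Union>\<C> = - \<Inter>(uminus ` \<C>)"
      by auto
    ultimately show "\<Union>\<C> \<in> uminus ` \<A>"
      by blast
  qed
  then obtain M' where "M' \<in> uminus ` \<A>" and max: "\<forall>X\<in>uminus ` \<A>. M' \<subseteq> X \<longrightarrow> X = M'"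
    by (rule bexE)
  then obtain M where M: "M \<in> \<A>" "M' = - M"
    by blast
  show ?thesis
  proof (intro bexI[OF _ M(1)] ballI impI)
    fix X
    assume "X \<in> \<A>" "X \<subseteq> M"
    then have "- X = - M"
      using max[rule_format, OF imageI[OF \<open>X \<in> \<A>\<close>]] M(2) by simp
    then show "X = M"
      by simp
  qed
qed

lemma exists_minimal_word_growth_ge:
  assumes "finite A" "S \<subseteq> UNIV \<rightarrow> A" "seq_closed S" "shift_invariant S" "word_growth_ge b S"
  obtains K where "K \<subseteq> S" "seq_closed K" "shift_invariant K" "word_growth_ge b K"
    and "\<And>L. L \<subseteq> K \<Longrightarrow> seq_closed L \<Longrightarrow> shift_invariant L \<Longrightarrow> word_growth_ge b L \<Longrightarrow> L = K"
proof -
  define \<F> where "\<F> = {K. K \<subseteq> S \<and> seq_closed K \<and> shift_invariant K \<and> word_growth_ge b K}"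
  have "\<exists>K\<in>\<F>. \<forall>L\<in>\<F>. L \<subseteq> K \<longrightarrow> L = K"
  proof (rule subset_Zorn_Inter)
    show "\<F> \<noteq> {}"
      using assms(3-5) unfolding \<F>_def by blast
    fix \<C>
    assume "\<C> \<noteq> {}" "subset.chain \<F> \<C>"
    then have mem: "K \<subseteq> S" "seq_closed K" "shift_invariant K" "word_growth_ge b K" if "K \<in> \<C>" for K
      using that unfolding subset_chain_def \<F>_def by auto
    have "K \<subseteq> UNIV \<rightarrow> A" if "K \<in> \<C>" for K
      using mem(1)[OF that] assms(2) by (rule subset_trans)
    then have "word_growth_ge b (\<Inter>\<C>)"
      using mem by (intro word_growth_ge_Inter_chain[OF assms(1) \<open>subset.chain \<F> \<C>\<close> \<open>\<C> \<noteq> {}\<close>]) blast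
    moreover obtain K0 where "K0 \<in> \<C>"
      using \<open>\<C> \<noteq> {}\<close> by blast
    then have "\<Inter>\<C> \<subseteq> S"
      using mem(1) by (meson Inf_lower2)
    moreover have "seq_closed (\<Inter>\<C>)"
      using mem(2) by (rule seq_closed_Inter)
    moreover have "shift_invariant (\<Inter>\<C>)"
      using mem(3) unfolding shift_invariant_def by blast
    ultimately show "\<Inter>\<C> \<in> \<F>"
      unfolding \<F>_def by blast
  qed
  then obtain K where "K \<in> \<F>" and K_min: "\<And>L. L \<in> \<F> \<Longrightarrow> L \<subseteq> K \<Longrightarrow> L = K"
    by blast
  show thesis
  proof (rule that)
    show "K \<subseteq> S" "seq_closed K" "shift_invariant K" "word_growth_ge b K"
      using \<open>K \<in> \<F>\<close> unfolding \<F>_def by auto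
    show "L = K" if "L \<subseteq> K" "seq_closed L" "shift_invariant L" "word_growth_ge b L" for L
    proof (rule K_min)
      show "L \<in> \<F>"
        using that \<open>K \<subseteq> S\<close> unfolding \<F>_def by auto
    qed (use that in simp)
  qed
qed

lemma scattered_not_word_growth_ge:
  assumes "finite A" "S \<subseteq> UNIV \<rightarrow> A" "seq_closed S" "shift_invariant S" "seq_scattered S"
    and "b > 1"
  shows "\<not> word_growth_ge b S"
proof
  assume "word_growth_ge b S"
  then obtain K where K: "K \<subseteq> S" "seq_closed K" "shift_invariant K" "word_growth_ge b K"
    and K_min: "\<And>L. L \<subseteq> K \<Longrightarrow> seq_closed L \<Longrightarrow> shift_invariant L \<Longrightarrow> word_growth_ge b L \<Longrightarrow> L = K"
    using exists_minimal_word_growth_ge[OF assms(1-4)] by blast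
  have "K \<subseteq> UNIV \<rightarrow> A"
    using K(1) assms(2) by (rule subset_trans)
  then have "word_growth_ge b (seq_derived K)"
    using K(2,3) assms(6) K(4) by (rule word_growth_ge_derived[OF assms(1)])
  then have derived_eq: "seq_derived K = K"
    by (intro K_min seq_derived_subset seq_closed_derived[OF K(2)] shift_invariant_derived[OF K(3)])
  have "1 \<le> real (card (words 0 K))"
    using K(4) unfolding word_growth_ge_def by (metis power_0)
  then have "K \<noteq> {}"
    by (auto simp: card_words_0)
  then obtain s n where s: "s \<in> K" "\<And>t. t \<in> K \<Longrightarrow> seq_agree n s t \<Longrightarrow> t = s"
    using seq_scatteredD[OF assms(5) K(1)] by blast
  then have "s \<in> seq_derived K"
    using derived_eq by simp
  then obtain t where "t \<in> K" "t \<noteq> s" "seq_agree n s t"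
    unfolding seq_derived_def by blast
  then show False
    using s(2) by blast
qed

theorem scattered_subshift_words_bound:
  assumes "finite A" "S \<subseteq> UNIV \<rightarrow> A" "seq_closed S" "shift_invariant S" "seq_scattered S"
    and "b > 1"
  shows "\<exists>C>0. \<forall>n. real (card (words n S)) \<le> C * b ^ n"
proof -
  obtain N where N: "N > 0" "real (card (words N S)) < b ^ N"
    using not_word_growth_ge_pos scattered_not_word_growth_ge[OF assms] assms(6) by blast
  have "real (card (words n S)) \<le> b ^ N * b ^ n" for n
  proof -
    define q r where "q = n div N" and "r = n mod N"
    have n_eq: "n = q * N + r"
      by (simp add: q_def r_def)
    have "r \<le> N"
      using N(1) by (simp add: r_def less_imp_le)
    have "card (words n S) \<le> card (words N S) ^ q * card (words r S)"
      using card_words_mult_le[OF assms(1,2,4), of q N r] n_eq by simp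
    also have "\<dots> \<le> card (words N S) ^ q * card (words N S)"
      using card_words_mono[OF finite_words[OF assms(1,2)] \<open>r \<le> N\<close>] by simp
    finally have "real (card (words n S)) \<le> real (card (words N S)) ^ q * real (card (words N S))"
      by (metis of_nat_le_iff of_nat_mult of_nat_power)
    also have "\<dots> \<le> (b ^ N) ^ q * b ^ N"
      using N(2) by (intro mult_mono power_mono) auto
    also have "\<dots> \<le> b ^ n * b ^ N"
    proof (rule mult_right_mono)
      show "(b ^ N) ^ q \<le> b ^ n"
        unfolding power_mult[symmetric] using assms(6) n_eq by (intro power_increasing) auto
    qed (use assms(6) in simp)
    finally show ?thesis
      by (simp add: mult.commute)
  qed
  then show ?thesis
    using assms(6) by (intro exI[of _ "b ^ N"]) auto
qed

section \<open>Itineraries in a Noetherian space\<close>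

lemma continuous_map_funpow:
  assumes "continuous_map X X f"
  shows "continuous_map X X (f ^^ k)"
proof (induction k)
  case 0
  then show ?case
    by (simp add: continuous_map_id)
next
  case (Suc k)
  then show ?case
    using continuous_map_compose[OF Suc.IH assms] by (simp add: comp_def)
qed

lemma funpow_in_topspace:
  assumes "continuous_map X X f" "x \<in> topspace X"
  shows "(f ^^ k) x \<in> topspace X"
  using continuous_map_image_subset_topspace[OF continuous_map_funpow[OF assms(1)]] assms(2) by blast

definition itinerary :: "('a \<Rightarrow> 'a) \<Rightarrow> 'a set set \<Rightarrow> 'a \<Rightarrow> nat \<Rightarrow> 'a set set" where
  "itinerary f U x k = {u\<in>U. (f ^^ k) x \<in> u}"

definition itinerary_shift :: "'a topology \<Rightarrow> ('a \<Rightarrow> 'a) \<Rightarrow> 'a set set \<Rightarrow> (nat \<Rightarrow> 'a set set) set" where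
  "itinerary_shift X f U = {s. \<forall>n. \<exists>x\<in>topspace X. seq_agree n s (itinerary f U x)}"

definition itinerary_cylinder ::
    "'a topology \<Rightarrow> ('a \<Rightarrow> 'a) \<Rightarrow> 'a set set \<Rightarrow> nat \<Rightarrow> (nat \<Rightarrow> 'a set set) \<Rightarrow> 'a set" where
  "itinerary_cylinder X f U n s = {x\<in>topspace X. seq_agree n s (itinerary f U x)}"

lemma itinerary_Suc: "itinerary f U (f x) k = itinerary f U x (Suc k)"
  by (simp add: itinerary_def funpow_swap1)

lemma itinerary_in_itinerary_shift: "x \<in> topspace X \<Longrightarrow> itinerary f U x \<in> itinerary_shift X f U"
  unfolding itinerary_shift_def using seq_agree_refl by blast

lemma itinerary_shift_alphabet: "itinerary_shift X f U \<subseteq> UNIV \<rightarrow> Pow U"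
proof
  fix s
  assume s: "s \<in> itinerary_shift X f U"
  show "s \<in> UNIV \<rightarrow> Pow U"
  proof (rule Pi_I)
    fix k
    obtain x where "seq_agree (Suc k) s (itinerary f U x)"
      using s unfolding itinerary_shift_def by blast
    then have "s k = itinerary f U x k"
      by (simp add: seq_agree_def)
    then show "s k \<in> Pow U"
      by (auto simp: itinerary_def)
  qed
qed

lemma seq_closed_itinerary_shift: "seq_closed (itinerary_shift X f U)"
  unfolding seq_closed_def
proof (intro allI impI)
  fix s
  assume near: "\<forall>n. \<exists>t\<in>itinerary_shift X f U. seq_agree n s t"
  show "s \<in> itinerary_shift X f U"
    unfolding itinerary_shift_def
  proof (intro CollectI allI)
    fix n
    obtain t where "t \<in> itinerary_shift X f U" "seq_agree n s t"
      using near by blast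
    moreover obtain x where "x \<in> topspace X" "seq_agree n t (itinerary f U x)"
      using calculation(1) unfolding itinerary_shift_def by blast
    ultimately show "\<exists>x\<in>topspace X. seq_agree n s (itinerary f U x)"
      by (meson seq_agree_trans)
  qed
qed

lemma shift_invariant_itinerary_shift:
  assumes "continuous_map X X f"
  shows "shift_invariant (itinerary_shift X f U)"
  unfolding shift_invariant_def
proof
  fix s
  assume s: "s \<in> itinerary_shift X f U"
  show "(\<lambda>k. s (Suc k)) \<in> itinerary_shift X f U"
    unfolding itinerary_shift_def
  proof (intro CollectI allI)
    fix n
    obtain x where x: "x \<in> topspace X" "seq_agree (Suc n) s (itinerary f U x)"
      using s unfolding itinerary_shift_def by blast
    have "f x \<in> topspace X"
      using funpow_in_topspace[OF assms x(1), of 1] by simp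
    moreover have "seq_agree n (\<lambda>k. s (Suc k)) (itinerary f U (f x))"
      using x(2) by (simp add: seq_agree_def itinerary_Suc)
    ultimately show "\<exists>x\<in>topspace X. seq_agree n (\<lambda>k. s (Suc k)) (itinerary f U x)"
      by blast
  qed
qed

lemma itinerary_cylinder_mono:
  "seq_agree n s r \<Longrightarrow> n \<le> m \<Longrightarrow> itinerary_cylinder X f U m r \<subseteq> itinerary_cylinder X f U n s"
  unfolding itinerary_cylinder_def seq_agree_def by auto

lemma itinerary_cylinder_locally_closed:
  assumes "continuous_map X X f" "finite U" "\<And>u. u \<in> U \<Longrightarrow> openin X u"
  obtains G F where "openin X G" "closedin X F" "itinerary_cylinder X f U n s = G \<inter> F"
proof (cases "\<forall>k<n. s k \<subseteq> U")
  case False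
  then have "itinerary_cylinder X f U n s = {} \<inter> {}"
    unfolding itinerary_cylinder_def seq_agree_def itinerary_def by auto
  then show ?thesis
    using that[of "{}" "{}"] by simp
next
  case True
  define pre where "pre = (\<lambda>(k, u). {x\<in>topspace X. (f ^^ k) x \<in> u})"
  have pre_open: "openin X (pre (k, u))" if "u \<in> U" for k u
    unfolding pre_def
    using openin_continuous_map_preimage[OF continuous_map_funpow[OF assms(1)] assms(3)[OF that]] by simp
  \<comment> \<open>x lies in the cylinder iff f^k x lies in every u \<in> s k and in no u \<in> U - s k, for k < n\<close>
  define G where "G = (\<Inter>i\<in>Sigma {..<n} s. pre i) \<inter> topspace X"
  define F where "F = topspace X - (\<Union>i\<in>Sigma {..<n} (\<lambda>k. U - s k). pre i)"
  have "finite (Sigma {..<n} s)"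
    using True assms(2) by (intro finite_SigmaI) (auto intro: finite_subset)
  then have "openin X G"
    unfolding G_def using True pre_open by (intro openin_INT) auto
  moreover have "closedin X F"
    unfolding F_def using pre_open by (intro closedin_diff openin_Union) auto
  moreover have "itinerary_cylinder X f U n s = G \<inter> F"
    using True unfolding itinerary_cylinder_def seq_agree_def itinerary_def G_def F_def pre_def
    by auto
  ultimately show ?thesis
    by (rule that)
qed

lemma locally_closed_eq_closure_disjoint:
  assumes "openin X G" "closedin X F" "C = G \<inter> F" "D \<subseteq> topspace X"
    and "X closure_of C = X closure_of D" "C \<inter> D = {}"
  shows "C = {}"
proof (rule ccontr)
  assume "C \<noteq> {}"
  then obtain x where "x \<in> C"
    by blast
  have "C \<subseteq> topspace X"
    using assms(1,3) openin_subset by blast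
  then have "x \<in> X closure_of D"
    using \<open>x \<in> C\<close> closure_of_subset assms(5) by blast
  moreover have "x \<in> G"
    using \<open>x \<in> C\<close> assms(3) by blast
  ultimately obtain y where "y \<in> D" "y \<in> G"
    using assms(1) unfolding in_closure_of by blast
  have "D \<subseteq> X closure_of C"
    using closure_of_subset[OF assms(4)] assms(5) by simp
  also have "\<dots> \<subseteq> F"
    using assms(2,3) by (intro closure_of_minimal) auto
  finally have "y \<in> C"
    using \<open>y \<in> D\<close> \<open>y \<in> G\<close> assms(3) by blast
  then show False
    using \<open>y \<in> D\<close> assms(6) by blast
qed

lemma itinerary_shift_eq_if_closure_eq:
  assumes "continuous_map X X f" "finite U" "\<And>u. u \<in> U \<Longrightarrow> openin X u"
    and "s \<in> itinerary_shift X f U"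
    and closure_eq: "\<And>m. n \<le> m \<Longrightarrow>
      X closure_of itinerary_cylinder X f U m s = X closure_of itinerary_cylinder X f U m t"
  shows "s = t"
proof (rule ccontr)
  let ?cyl = "itinerary_cylinder X f U"
  assume "s \<noteq> t"
  then obtain k where k: "s k \<noteq> t k"
    by (meson ext)
  define m where "m = Suc k + n"
  have "?cyl m s \<inter> ?cyl m t = {}"
    using k unfolding itinerary_cylinder_def seq_agree_def m_def by auto
  moreover have "X closure_of ?cyl m s = X closure_of ?cyl m t"
    using closure_eq by (simp add: m_def)
  moreover have "?cyl m t \<subseteq> topspace X"
    unfolding itinerary_cylinder_def by blast
  moreover obtain G F where "openin X G" "closedin X F" "?cyl m s = G \<inter> F"
    using itinerary_cylinder_locally_closed[OF assms(1-3)] by blast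
  ultimately have "?cyl m s = {}"
    using locally_closed_eq_closure_disjoint by metis
  moreover obtain x where "x \<in> topspace X" "seq_agree m s (itinerary f U x)"
    using assms(4) unfolding itinerary_shift_def by blast
  then have "x \<in> ?cyl m s"
    unfolding itinerary_cylinder_def by blast
  ultimately show False
    by blast
qed

lemma noetherian_space_wf_closedin:
  assumes "noetherian_space X"
  shows "wf {(A, B). closedin X B \<and> A \<subset> B}"
  unfolding wf_iff_no_infinite_down_chain
proof
  assume "\<exists>C. \<forall>i. (C (Suc i), C i) \<in> {(A, B). closedin X B \<and> A \<subset> B}"
  then obtain C where "\<forall>i. closedin X (C i) \<and> C (Suc i) \<subset> C i"
    by auto
  then have C: "\<And>i. closedin X (C i)" "\<And>i. C (Suc i) \<subset> C i"
    by auto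
  have "decseq C"
    using C(2) by (intro decseq_SucI) (simp add: less_imp_le)
  then obtain m where "\<forall>n\<ge>m. C n = C m"
    using assms C(1) unfolding noetherian_space_def by blast
  moreover have "m \<le> Suc m"
    by simp
  ultimately have "C (Suc m) = C m"
    by blast
  then show False
    using C(2)[of m] by simp
qed

lemma scattered_itinerary_shift:
  assumes "continuous_map X X f" "finite U" "\<And>u. u \<in> U \<Longrightarrow> openin X u" "noetherian_space X"
  shows "seq_scattered (itinerary_shift X f U)"
  unfolding seq_scattered_def
proof (intro allI impI)
  fix K
  assume K: "K \<subseteq> itinerary_shift X f U" "K \<noteq> {}"
  let ?cyl = "itinerary_cylinder X f U"
  define \<D> where "\<D> = {X closure_of ?cyl n s | n s. s \<in> K}"
  obtain s1 where "s1 \<in> K"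
    using K(2) by blast
  then have "X closure_of ?cyl 0 s1 \<in> \<D>"
    unfolding \<D>_def by blast
  then obtain A0 where "A0 \<in> \<D>" and A0_min: "\<And>B. (B, A0) \<in> {(A, B). closedin X B \<and> A \<subset> B} \<Longrightarrow> B \<notin> \<D>"
    using wfE_min[OF noetherian_space_wf_closedin[OF assms(4)]] by metis
  then obtain n0 s0 where s0: "s0 \<in> K" "A0 = X closure_of ?cyl n0 s0"
    unfolding \<D>_def by blast
  have closure_eq: "X closure_of ?cyl m r = A0" if "r \<in> K" "seq_agree n0 s0 r" "n0 \<le> m" for m r
  proof -
    have "X closure_of ?cyl m r \<subseteq> A0"
      unfolding s0(2) using itinerary_cylinder_mono[OF that(2,3)] by (rule closure_of_mono)
    moreover have "X closure_of ?cyl m r \<in> \<D>"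
      unfolding \<D>_def using that(1) by blast
    moreover have "closedin X A0"
      unfolding s0(2) by simp
    ultimately show ?thesis
      using A0_min by blast
  qed
  have "s0 \<in> itinerary_shift X f U"
    using K(1) s0(1) by blast
  have "t = s0" if "t \<in> K" "seq_agree n0 s0 t" for t
  proof -
    have "X closure_of ?cyl m s0 = X closure_of ?cyl m t" if "n0 \<le> m" for m
      using closure_eq[OF s0(1) seq_agree_refl that] closure_eq[OF \<open>t \<in> K\<close> \<open>seq_agree n0 s0 t\<close> that]
      by simp
    then show ?thesis
      using itinerary_shift_eq_if_closure_eq[OF assms(1-3) \<open>s0 \<in> itinerary_shift X f U\<close>, of n0 t]
      by simp
  qed
  then show "\<exists>s\<in>K. \<exists>n. \<forall>t\<in>K. seq_agree n s t \<longrightarrow> t = s"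
    using s0(1) by blast
qed

definition word_cover_member :: "'a topology \<Rightarrow> ('a \<Rightarrow> 'a) \<Rightarrow> nat \<Rightarrow> (nat \<Rightarrow> 'a set set) \<Rightarrow> 'a set" where
  "word_cover_member X f n w = topspace X \<inter> (\<Inter>k\<in>{..<n}. (f ^^ k) -` (SOME u. u \<in> w k))"

lemma word_cover_member_itinerary:
  assumes "continuous_map X X f" "\<Union>U = topspace X" "x \<in> topspace X"
  shows "word_cover_member X f n (restrict (itinerary f U x) {..<n}) \<in> join_iter X f U n"
    and "x \<in> word_cover_member X f n (restrict (itinerary f U x) {..<n})"
proof -
  have "itinerary f U x k \<noteq> {}" for k
    using funpow_in_topspace[OF assms(1,3)] assms(2) unfolding itinerary_def by blast
  then have chosen: "(SOME u. u \<in> itinerary f U x k) \<in> itinerary f U x k" for k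
    by (simp add: some_in_eq)
  define g where "g k = (SOME u. u \<in> itinerary f U x k)" for k
  have eq: "word_cover_member X f n (restrict (itinerary f U x) {..<n})
      = topspace X \<inter> (\<Inter>k\<in>{..<n}. (f ^^ k) -` g k)"
    unfolding word_cover_member_def g_def by simp
  have g: "g k \<in> U" "x \<in> (f ^^ k) -` g k" for k
    using chosen[of k] unfolding itinerary_def g_def by auto
  then show "word_cover_member X f n (restrict (itinerary f U x) {..<n}) \<in> join_iter X f U n"
    unfolding join_iter_def eq by blast
  show "x \<in> word_cover_member X f n (restrict (itinerary f U x) {..<n})"
    unfolding eq using assms(3) g(2) by blast
qed

lemma min_subcover_card_le:
  "W \<subseteq> V \<Longrightarrow> finite W \<Longrightarrow> topspace X \<subseteq> \<Union>W \<Longrightarrow> min_subcover_card X V \<le> card W"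
  unfolding min_subcover_card_def by (rule Least_le) blast

lemma min_subcover_card_join_iter_le:
  assumes "continuous_map X X f" "finite_open_cover X U"
  shows "min_subcover_card X (join_iter X f U n) \<le> card (words n (itinerary_shift X f U))"
proof -
  have "finite U" and cover: "\<Union>U = topspace X"
    using assms(2) unfolding finite_open_cover_def by auto
  let ?word = "\<lambda>x. restrict (itinerary f U x) {..<n}"
  define W where "W = word_cover_member X f n ` ?word ` topspace X"
  have "itinerary f U ` topspace X \<subseteq> itinerary_shift X f U"
    by (intro image_subsetI itinerary_in_itinerary_shift)
  from image_mono[OF this, of "\<lambda>s. restrict s {..<n}"]
  have "?word ` topspace X \<subseteq> words n (itinerary_shift X f U)"
    by (simp only: words_def image_image)
  moreover have "finite (words n (itinerary_shift X f U))"
    by (rule finite_words[OF _ itinerary_shift_alphabet]) (simp add: \<open>finite U\<close>)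
  ultimately have "finite (?word ` topspace X)"
    "card (?word ` topspace X) \<le> card (words n (itinerary_shift X f U))"
    by (auto intro: finite_subset card_mono)
  then have "finite W" "card W \<le> card (words n (itinerary_shift X f U))"
    unfolding W_def using card_image_le le_trans by blast+
  moreover have "W \<subseteq> join_iter X f U n" "topspace X \<subseteq> \<Union>W"
    unfolding W_def using word_cover_member_itinerary[OF assms(1) cover] by blast+
  ultimately show ?thesis
    using min_subcover_card_le le_trans by blast
qed

lemma min_subcover_card_join_iter_bound:
  assumes "noetherian_space X" "continuous_map X X f" "finite_open_cover X U" "b > 1"
  shows "\<exists>C>0. \<forall>n. real (min_subcover_card X (join_iter X f U n)) \<le> C * b ^ n"
proof -
  have "finite U" "\<And>u. u \<in> U \<Longrightarrow> openin X u"
    using assms(3) unfolding finite_open_cover_def by auto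
  then obtain C where "C > 0" "\<And>n. real (card (words n (itinerary_shift X f U))) \<le> C * b ^ n"
    using scattered_subshift_words_bound[OF _ itinerary_shift_alphabet seq_closed_itinerary_shift
        shift_invariant_itinerary_shift[OF assms(2)] scattered_itinerary_shift[OF assms(2) _ _ assms(1)] assms(4)]
    by blast
  moreover have "real (min_subcover_card X (join_iter X f U n)) \<le> real (card (words n (itinerary_shift X f U)))" for n
    using min_subcover_card_join_iter_le[OF assms(2,3)] by simp
  ultimately show ?thesis
    by (meson order_trans)
qed

section \<open>Zero entropy\<close>

lemma ln_div_le_of_le_mult_power:
  fixes x C e :: real
  assumes "0 < x" "x \<le> C * e ^ n" "0 < e" "0 < n"
  shows "ln x / real n \<le> ln C / real n + ln e"
proof -
  have "C > 0"
    using assms(1-3) by (smt (verit) zero_less_power mult_nonpos_nonneg)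
  have "ln x \<le> ln (C * e ^ n)"
    using assms(1,2) by simp
  also have "\<dots> = ln C + real n * ln e"
    using \<open>C > 0\<close> assms(3) by (simp add: ln_mult ln_realpow)
  finally have "ln x / real n \<le> (ln C + real n * ln e) / real n"
    by (rule divide_right_mono) simp
  also have "\<dots> = ln C / real n + ln e"
    using assms(4) by (simp add: add_divide_distrib)
  finally show ?thesis .
qed

text \<open>Since ln 0 = 0, indices with a n = 0 contribute 0.\<close>

lemma ln_over_n_tendsto_0:
  fixes a :: "nat \<Rightarrow> nat"
  assumes "\<And>\<epsilon>. \<epsilon> > 0 \<Longrightarrow> \<exists>C. \<forall>n. real (a n) \<le> C * (1 + \<epsilon>) ^ n"
  shows "(\<lambda>n. ln (real (a n)) / real n) \<longlonglongrightarrow> 0"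
proof (rule order_tendstoI)
  fix y :: real
  assume "y < 0"
  have "0 \<le> ln (real (a n))" for n
    by (cases "a n = 0") auto
  then show "eventually (\<lambda>n. y < ln (real (a n)) / real n) sequentially"
    using \<open>y < 0\<close> by (intro always_eventually allI) (meson divide_nonneg_nonneg less_le_trans of_nat_0_le_iff)
next
  fix y :: real
  assume "y > 0"
  define \<epsilon> where "\<epsilon> = exp (y / 2) - 1"
  have "\<epsilon> > 0" "ln (1 + \<epsilon>) = y / 2"
    using \<open>y > 0\<close> by (simp_all add: \<epsilon>_def)
  then obtain C where C: "\<And>n. real (a n) \<le> C * (1 + \<epsilon>) ^ n"
    using assms by blast
  have "eventually (\<lambda>n. ln C / real n < y / 2) sequentially"
    using \<open>y > 0\<close> by (intro order_tendstoD(2)[OF lim_const_over_n]) simp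
  moreover have "eventually (\<lambda>n. n > 0) sequentially"
    by (rule eventually_gt_at_top)
  ultimately show "eventually (\<lambda>n. ln (real (a n)) / real n < y) sequentially"
  proof eventually_elim
    case (elim n)
    show ?case
    proof (cases "a n = 0")
      case True
      then show ?thesis
        using \<open>y > 0\<close> by simp
    next
      case False
      then have "ln (real (a n)) / real n \<le> ln C / real n + ln (1 + \<epsilon>)"
        using C[of n] \<open>\<epsilon> > 0\<close> elim(2) by (intro ln_div_le_of_le_mult_power) auto
      then show ?thesis
        using elim(1) \<open>ln (1 + \<epsilon>) = y / 2\<close> by linarith
    qed
  qed
qed

theorem theorem3p1:
  fixes X :: "'a topology" and f :: "'a \<Rightarrow> 'a"
  assumes "compact_space X"
    and "noetherian_space X"
    and "continuous_map X X f"
  shows "(\<forall>U. finite_open_cover X U \<longrightarrow>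
            (\<forall>\<epsilon>::real. \<epsilon> > 0 \<longrightarrow>
               (\<exists>C::real. C > 0 \<and>
                  (\<forall>n. real (min_subcover_card X (join_iter X f U n)) \<le> C * (1 + \<epsilon>) ^ n))))
         \<and> h_top X f = 0"
proof
  have bound: "\<exists>C>0. \<forall>n. real (min_subcover_card X (join_iter X f U n)) \<le> C * (1 + \<epsilon>) ^ n"
    if "finite_open_cover X U" "\<epsilon> > 0" for U and \<epsilon> :: real
    using min_subcover_card_join_iter_bound[OF assms(2,3) that(1)] that(2) by simp
  then show "\<forall>U. finite_open_cover X U \<longrightarrow> (\<forall>\<epsilon>::real. \<epsilon> > 0 \<longrightarrow>
      (\<exists>C::real. C > 0 \<and> (\<forall>n. real (min_subcover_card X (join_iter X f U n)) \<le> C * (1 + \<epsilon>) ^ n)))"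
    by blast
  have "lim (\<lambda>n. ln (real (min_subcover_card X (join_iter X f U n))) / real n) = 0"
    if "finite_open_cover X U" for U
    using bound[OF that] by (intro limI ln_over_n_tendsto_0) blast
  then have "h_top X f = (SUP U\<in>{U. finite_open_cover X U}. ereal 0)"
    unfolding h_top_def by (intro SUP_cong) auto
  moreover have "{U. finite_open_cover X U} \<noteq> {}"
    using finite_open_cover_def by blast
  ultimately show "h_top X f = 0"
    by (simp add: zero_ereal_def)
qed

end
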